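(* Let $p<q$ be coprime positive integers. Define $\mu:\mathbb Z^3\to\mathbb Z^3$ by $\mu(d_0,d_1,d_j)=(d_0-pd_1+qd_j,\;d_1-d_j,\;pd_1-qd_j)$, let $\Lambda=\mu(\mathbb Z_{\ge0}^3)$, and for $(n,c)\in\mathbb Z^2$ such that $(n,c,\omega)\in\Lambda$ for some $\omega$, let $\omega_{(n,c)}=\min\{\omega\in\mathbb Z:(n,c,\omega)\in\Lambda\}$. Then for every $(n,c,\omega)\in\Lambda$, one has $n+\omega<q-p$ if and only if $\omega=\omega_{(n,c)}$.
   Context: The minimum $\omega_{(n,c)}$ exists whenever the set is nonempty (for $(d_0,d_1,d_j)\in\mathbb Z_{\ge 0}^3$ with $\mu(d_0,d_1,d_j)=(n,c,\omega)$ one has $d_0=n+\omega\ge0$). Here $\mu$ records, for a monomial $X_0^{d_0}X_1^{d_1}X_j^{d_j}$ in $\mathbb C[X_0,X_1,X_j]$ ($j\in\{3,4\}$), its $\mathbb C^*$-weight $n$, the difference $c=d_1-d_j$ and an auxiliary weight $\omega$. *)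

theory Defs
  imports Main
begin

definition mu :: "int \<Rightarrow> int \<Rightarrow> int \<times> int \<times> int \<Rightarrow> int \<times> int \<times> int" where
  "mu p q = (\<lambda>(d0, d1, dj). (d0 - p * d1 + q * dj, d1 - dj, p * d1 - q * dj))"

definition Lambda :: "int \<Rightarrow> int \<Rightarrow> (int \<times> int \<times> int) set" where
  "Lambda p q = mu p q ` {(d0, d1, dj). 0 \<le> d0 \<and> 0 \<le> d1 \<and> 0 \<le> dj}"

text \<open>omega_(n,c) = min of omega with (n,c,omega) in Lambda (meaningful when nonempty).\<close>
definition omega_min :: "int \<Rightarrow> int \<Rightarrow> int \<Rightarrow> int \<Rightarrow> int" where
  "omega_min p q n c = (LEAST w. (n, c, w) \<in> Lambda p q)"

end

theory Submission
  imports Defs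
begin

text \<open>
  Over a fixed pair \<open>(n, c)\<close>, eliminating \<open>d\<^sub>1 = d\<^sub>j + c\<close> shows that the weights occurring
  in \<open>\<Lambda>\<close> are \<open>\<omega> = p c - (q - p) d\<^sub>j\<close> with \<open>d\<^sub>j \<ge> max 0 (-c)\<close> and \<open>n + \<omega> \<ge> 0\<close>: an
  arithmetic progression of step \<open>q - p\<close> that descends until \<open>n + \<omega>\<close> would become negative.
  Its least element is therefore the unique one with \<open>0 \<le> n + \<omega> < q - p\<close>.
\<close>

lemma Lambda_iff:
  "(n, c, w) \<in> Lambda p q \<longleftrightarrow>
     (\<exists>d1 dj. 0 \<le> n + w \<and> 0 \<le> d1 \<and> 0 \<le> dj \<and> c = d1 - dj \<and> w = p * d1 - q * dj)"
proof
  assume "(n, c, w) \<in> Lambda p q"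
  then show "\<exists>d1 dj. 0 \<le> n + w \<and> 0 \<le> d1 \<and> 0 \<le> dj \<and> c = d1 - dj \<and> w = p * d1 - q * dj"
    unfolding Lambda_def mu_def by auto
next
  assume "\<exists>d1 dj. 0 \<le> n + w \<and> 0 \<le> d1 \<and> 0 \<le> dj \<and> c = d1 - dj \<and> w = p * d1 - q * dj"
  then obtain d1 dj where "0 \<le> n + w" "0 \<le> d1" "0 \<le> dj" "c = d1 - dj" "w = p * d1 - q * dj"
    by blast
  then have "mu p q (n + w, d1, dj) = (n, c, w)" and "0 \<le> n + w \<and> 0 \<le> d1 \<and> 0 \<le> dj"
    unfolding mu_def by simp_all
  then show "(n, c, w) \<in> Lambda p q"
    unfolding Lambda_def by (metis (mono_tags, lifting) case_prod_conv image_eqI mem_Collect_eq)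
qed

lemma Lambda_weight_lower_bound:
  "(n, c, w) \<in> Lambda p q \<Longrightarrow> 0 \<le> n + w"
  by (auto simp: Lambda_iff)

lemma Lambda_step_down:
  assumes "(n, c, w) \<in> Lambda p q" and "0 \<le> k" and "0 \<le> n + w - (q - p) * k"
  shows "(n, c, w - (q - p) * k) \<in> Lambda p q"
proof -
  obtain d1 dj where "0 \<le> d1" "0 \<le> dj" "c = d1 - dj" "w = p * d1 - q * dj"
    using assms(1) by (auto simp: Lambda_iff)
  then have "c = (d1 + k) - (dj + k)" and "w - (q - p) * k = p * (d1 + k) - q * (dj + k)"
    by (simp_all add: algebra_simps)
  moreover have "0 \<le> n + (w - (q - p) * k)" "0 \<le> d1 + k" "0 \<le> dj + k"
    using \<open>0 \<le> d1\<close> \<open>0 \<le> dj\<close> assms(2,3) by simp_all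
  ultimately show ?thesis
    unfolding Lambda_iff by blast
qed

lemma Lambda_fibre_dvd:
  assumes "(n, c, w) \<in> Lambda p q" and "(n, c, w') \<in> Lambda p q"
  shows "(q - p) dvd (w' - w)"
proof -
  obtain d1 dj where "c = d1 - dj" "w = p * d1 - q * dj"
    using assms(1) by (auto simp: Lambda_iff)
  moreover obtain e1 ej where "c = e1 - ej" "w' = p * e1 - q * ej"
    using assms(2) by (auto simp: Lambda_iff)
  ultimately have "w' - w = (q - p) * (dj - ej)"
    by algebra
  then show ?thesis by simp
qed

lemma Lambda_fibre_minimal:
  assumes "p < q" and "(n, c, w) \<in> Lambda p q" and "(n, c, w') \<in> Lambda p q"
    and "n + w < q - p"
  shows "w \<le> w'"
proof -
  obtain k where k: "w' - w = (q - p) * k"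
    using Lambda_fibre_dvd[OF assms(2,3)] by blast
  have "(q - p) * (-1) < (q - p) * k"
    using k Lambda_weight_lower_bound[OF assms(3)] assms(4) by simp
  then have "-1 < k"
    by (rule mult_left_less_imp_less) (use assms(1) in simp)
  then have "0 \<le> (q - p) * k"
    using assms(1) by simp
  with k show ?thesis by simp
qed

lemma omega_min_eqI:
  assumes "p < q" and "(n, c, w) \<in> Lambda p q" and "n + w < q - p"
  shows "omega_min p q n c = w"
  unfolding omega_min_def
  by (rule Least_equality) (use assms Lambda_fibre_minimal in auto)

lemma Lambda_fibre_reduce:
  assumes "p < q" and "(n, c, w) \<in> Lambda p q"
  obtains k where "(n, c, w - (q - p) * k) \<in> Lambda p q"
    and "n + (w - (q - p) * k) = (n + w) mod (q - p)"
proof -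
  let ?k = "(n + w) div (q - p)"
  have "0 \<le> ?k"
    using assms Lambda_weight_lower_bound[OF assms(2)] by (simp add: pos_imp_zdiv_nonneg_iff)
  have eq: "n + (w - (q - p) * ?k) = (n + w) mod (q - p)"
    by (simp add: minus_div_mult_eq_mod[symmetric] algebra_simps)
  have "0 \<le> n + w - (q - p) * ?k"
    using eq pos_mod_sign[of "q - p" "n + w"] assms(1) by linarith
  then have "(n, c, w - (q - p) * ?k) \<in> Lambda p q"
    by (rule Lambda_step_down[OF assms(2) \<open>0 \<le> ?k\<close>])
  then show ?thesis using eq by (rule that)
qed

theorem lemma4p15:
  fixes p q n c w :: int
  assumes "0 < p" and "p < q" and "coprime p q"
    and "(n, c, w) \<in> Lambda p q"
  shows "n + w < q - p \<longleftrightarrow> w = omega_min p q n c"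
proof
  assume "n + w < q - p"
  then show "w = omega_min p q n c"
    using omega_min_eqI assms(2,4) by simp
next
  assume w_min: "w = omega_min p q n c"
  obtain k where k: "(n, c, w - (q - p) * k) \<in> Lambda p q"
    and reduced: "n + (w - (q - p) * k) = (n + w) mod (q - p)"
    using Lambda_fibre_reduce[OF assms(2,4)] by blast
  have reduced_lt: "n + (w - (q - p) * k) < q - p"
    using reduced assms(2) by simp
  then have "w - (q - p) * k = w"
    using omega_min_eqI[OF assms(2) k] w_min by simp
  with reduced_lt show "n + w < q - p" by simp
qed

end
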